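(* Let $(\mathcal E,B,\mathcal L_{\mathcal P})$ be an epistemic space with $|\mathcal P|\ge 2$, let $\mathcal S$ be a set of agents, and let $\nabla$ be an ES basic fusion operator. If $\nabla$ satisfies (ESF-SD), (ESF-P) and (ESF-I), then $\nabla$ satisfies (ESF-D).
   Context: $\mathcal L_{\mathcal P}$ is the set of propositional formulas over a finite set $\mathcal P$ of variables, $\mathcal W_{\mathcal P}$ its set of valuations (interpretations), and $[\![\phi]\!]$ the set of models of $\phi$. For a nonempty set $M$ of valuations, $\varphi_M$ denotes a formula with $[\![\varphi_M]\!]=M$ (written $\varphi_w$, $\varphi_{w,w'}$, etc.). An epistemic space is a triple $(\mathcal E,B,\mathcal L_{\mathcal P})$ with $\mathcal E$ a nonempty set (of epistemic states) and $B:\mathcal E\to\mathcal L_{\mathcal P}$ a function whose image modulo logical equivalence is exactly the set of consistent formulas modulo equivalence. Agents form a well-ordered set $(\mathcal S,<)$; a society is a nonempty finite $N\subseteq\mathcal S$; an $N$-profile is a function $\Phi:N\to\mathcal E$, with $E_i:=\Phi(i)$; for $N=\{i\}$ the profile is identified with $E_i$ (an $i$-profile). Profiles $\Phi$ on $N=\{i_1<\dots<i_n\}$ and $\Psi$ on $M=\{j_1<\dots<j_m\}$ are equivalent, $\Phi\equiv\Psi$, if $n=m$ and $\Phi(i_k)=\Psi(j_k)$ for all $k$. An ES combination operator $\nabla$ assigns to every profile $\Phi$ (of any society) and every $E\in\mathcal E$ an epistemic state $\nabla(\Phi,E)\in\mathcal E$. It is an ES basic fusion operator if for all profiles $\Phi,\Phi'$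 and $E,E',E''\in\mathcal E$: (ESF1) $B(\nabla(\Phi,E))\vdash B(E)$; (ESF2) if $\Phi\equiv\Phi'$ and $B(E)\equiv B(E')$ then $B(\nabla(\Phi,E))\equiv B(\nabla(\Phi',E'))$; (ESF3) if $B(E)\equiv B(E')\wedge B(E'')$ then $B(\nabla(\Phi,E'))\wedge B(E'')\vdash B(\nabla(\Phi,E))$; (ESF4) if $B(E)\equiv B(E')\wedge B(E'')$ and $B(\nabla(\Phi,E'))\wedge B(E'')\nvdash\bot$ then $B(\nabla(\Phi,E))\vdash B(\nabla(\Phi,E'))\wedge B(E'')$. Social postulates: (ESF-SD) for every agent $i$, every three interpretations $w,w',w''$ and every $E_{w,w'},E_{w',w''}\in\mathcal E$ with $[\![B(E_{w,w'})]\!]=\{w,w'\}$, $[\![B(E_{w',w''})]\!]=\{w',w''\}$, each of the following four pairs of conditions is realised by some $i$-profile $E_i$: (i) $B(\nabla(E_i,E_{w,w'}))\equiv\varphi_{w,w'}$ and $B(\nabla(E_i,E_{w',w''}))\equiv\varphi_{w',w''}$; (ii) $\equiv\varphi_{w,w'}$ and $\equiv\varphi_{w'}$; (iii) $\equiv\varphi_w$ and $\equiv\varphi_{w',w''}$; (iv) $\equiv\varphi_w$ and $\equiv\varphi_{w'}$. (ESF-P) for every society $N$, every $N$-profile $\Phi$ and all $E,E'$: if $\bigwedge_{i\in N}B(\nabla(E_i,E))\nvdash\bot$ and $B(\nabla(E_i,E))\wedge B(E')\vdash\bot$ for all $i\in N$, then $B(\nabla(\Phi,E))\wedge B(E')\vdash\bot$.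 (ESF-I) for every society $N$, all $N$-profiles $\Phi,\Phi'$ and every $E$: if for every $E'$ with $B(E')\vdash B(E)$ one has $B(\nabla(E_j,E'))\equiv B(\nabla(E'_j,E'))$ for all $j\in N$, then $B(\nabla(\Phi,E))\equiv B(\nabla(\Phi',E))$. (ESF-D) for every society $N$ there exists $d_N\in N$ such that for every $N$-profile $\Phi$ and every $E$, $B(\nabla(\Phi,E))\vdash B(\nabla(E_{d_N},E))$. *)

theory Defs
  imports Main "HOL-Library.FuncSet"
begin

datatype 'p form =
    Var 'p | Bot | Top | Neg "'p form" | Conj "'p form" "'p form"
  | Disj "'p form" "'p form" | Imp "'p form" "'p form"

text \<open>Valuations (interpretations) are sets of variables that are true.\<close>
type_synonym 'p valuation = "'p set"

fun sat :: "'p valuation \<Rightarrow> 'p form \<Rightarrow> bool" where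
  "sat w (Var p) = (p \<in> w)"
| "sat w Bot = False"
| "sat w Top = True"
| "sat w (Neg f) = (\<not> sat w f)"
| "sat w (Conj f g) = (sat w f \<and> sat w g)"
| "sat w (Disj f g) = (sat w f \<or> sat w g)"
| "sat w (Imp f g) = (sat w f \<longrightarrow> sat w g)"

definition models :: "'p form \<Rightarrow> 'p valuation set" where
  "models f = {w. sat w f}"

definition entails :: "'p form \<Rightarrow> 'p form \<Rightarrow> bool" where
  "entails f g \<longleftrightarrow> models f \<subseteq> models g"

definition fequiv :: "'p form \<Rightarrow> 'p form \<Rightarrow> bool" where
  "fequiv f g \<longleftrightarrow> models f = models g"

definition consistent :: "'p form \<Rightarrow> bool" where
  "consistent f \<longleftrightarrow> \<not> entails f Bot"

definition epistemic_space :: "('e \<Rightarrow> 'p form) \<Rightarrow> bool" where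
  "epistemic_space B \<longleftrightarrow>
     (\<exists>E::'e. True) \<and>
     (\<forall>E. consistent (B E)) \<and>
     (\<forall>f. consistent f \<longrightarrow> (\<exists>E. fequiv (B E) f))"

text \<open>An N-profile is a function N \<rightarrow> E, represented as an extensional function on N.\<close>

definition society :: "'ag set \<Rightarrow> bool" where
  "society N \<longleftrightarrow> N \<noteq> {} \<and> finite N"

definition profile :: "'ag set \<Rightarrow> ('ag \<Rightarrow> 'e) \<Rightarrow> bool" where
  "profile N \<Phi> \<longleftrightarrow> society N \<and> \<Phi> \<in> N \<rightarrow>\<^sub>E UNIV"

text \<open>Equivalence of profiles: same length and same states, agent by agent in increasing order.\<close>
definition prof_equiv :: "'ag::wellorder set \<Rightarrow> ('ag \<Rightarrow> 'e) \<Rightarrow> 'ag set \<Rightarrow> ('ag \<Rightarrow> 'e) \<Rightarrow> bool" where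
  "prof_equiv N \<Phi> M \<Psi> \<longleftrightarrow> map \<Phi> (sorted_list_of_set N) = map \<Psi> (sorted_list_of_set M)"

type_synonym ('ag, 'e) comb_op = "'ag set \<Rightarrow> ('ag \<Rightarrow> 'e) \<Rightarrow> 'e \<Rightarrow> 'e"

definition single :: "'ag \<Rightarrow> 'e \<Rightarrow> 'ag \<Rightarrow> 'e" where
  "single i Ei = (\<lambda>j\<in>{i}. Ei)"

definition nabla1 :: "('ag, 'e) comb_op \<Rightarrow> 'ag \<Rightarrow> 'e \<Rightarrow> 'e \<Rightarrow> 'e" where
  "nabla1 nabla i Ei E = nabla {i} (single i Ei) E"

definition ES_basic_fusion :: "('e \<Rightarrow> 'p form) \<Rightarrow> ('ag::wellorder, 'e) comb_op \<Rightarrow> bool" where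
  "ES_basic_fusion B nabla \<longleftrightarrow>
     \<comment> \<open>ESF1\<close>
     (\<forall>N \<Phi> E. profile N \<Phi> \<longrightarrow> entails (B (nabla N \<Phi> E)) (B E)) \<and>
     \<comment> \<open>ESF2\<close>
     (\<forall>N \<Phi> N' \<Phi>' E E'. profile N \<Phi> \<longrightarrow> profile N' \<Phi>' \<longrightarrow>
        prof_equiv N \<Phi> N' \<Phi>' \<longrightarrow> fequiv (B E) (B E') \<longrightarrow>
        fequiv (B (nabla N \<Phi> E)) (B (nabla N' \<Phi>' E'))) \<and>
     \<comment> \<open>ESF3\<close>
     (\<forall>N \<Phi> E E' E''. profile N \<Phi> \<longrightarrow> fequiv (B E) (Conj (B E') (B E'')) \<longrightarrow>
        entails (Conj (B (nabla N \<Phi> E')) (B E'')) (B (nabla N \<Phi> E))) \<and>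
     \<comment> \<open>ESF4\<close>
     (\<forall>N \<Phi> E E' E''. profile N \<Phi> \<longrightarrow> fequiv (B E) (Conj (B E') (B E'')) \<longrightarrow>
        \<not> entails (Conj (B (nabla N \<Phi> E')) (B E'')) Bot \<longrightarrow>
        entails (B (nabla N \<Phi> E)) (Conj (B (nabla N \<Phi> E')) (B E'')))"

definition ESF_SD :: "('e \<Rightarrow> 'p form) \<Rightarrow> ('ag, 'e) comb_op \<Rightarrow> bool" where
  "ESF_SD B nabla \<longleftrightarrow>
     (\<forall>(i::'ag) (w::'p valuation) w' w'' Eww' Ew'w''.
        w \<noteq> w' \<and> w' \<noteq> w'' \<and> w \<noteq> w'' \<longrightarrow>
        models (B Eww') = {w, w'} \<longrightarrow> models (B Ew'w'') = {w', w''} \<longrightarrow>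
        (\<exists>Ei. models (B (nabla1 nabla i Ei Eww')) = {w, w'} \<and>
              models (B (nabla1 nabla i Ei Ew'w'')) = {w', w''}) \<and>
        (\<exists>Ei. models (B (nabla1 nabla i Ei Eww')) = {w, w'} \<and>
              models (B (nabla1 nabla i Ei Ew'w'')) = {w'}) \<and>
        (\<exists>Ei. models (B (nabla1 nabla i Ei Eww')) = {w} \<and>
              models (B (nabla1 nabla i Ei Ew'w'')) = {w', w''}) \<and>
        (\<exists>Ei. models (B (nabla1 nabla i Ei Eww')) = {w} \<and>
              models (B (nabla1 nabla i Ei Ew'w'')) = {w'}))"

definition ESF_P :: "('e \<Rightarrow> 'p form) \<Rightarrow> ('ag, 'e) comb_op \<Rightarrow> bool" where
  "ESF_P B nabla \<longleftrightarrow>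
     (\<forall>N \<Phi> E E'. profile N \<Phi> \<longrightarrow>
        (\<Inter>i\<in>N. models (B (nabla1 nabla i (\<Phi> i) E))) \<noteq> {} \<longrightarrow>
        (\<forall>i\<in>N. entails (Conj (B (nabla1 nabla i (\<Phi> i) E)) (B E')) Bot) \<longrightarrow>
        entails (Conj (B (nabla N \<Phi> E)) (B E')) Bot)"

definition ESF_I :: "('e \<Rightarrow> 'p form) \<Rightarrow> ('ag, 'e) comb_op \<Rightarrow> bool" where
  "ESF_I B nabla \<longleftrightarrow>
     (\<forall>N \<Phi> \<Phi>' E. profile N \<Phi> \<longrightarrow> profile N \<Phi>' \<longrightarrow>
        (\<forall>E'. entails (B E') (B E) \<longrightarrow>
           (\<forall>j\<in>N. fequiv (B (nabla1 nabla j (\<Phi> j) E')) (B (nabla1 nabla j (\<Phi>' j) E')))) \<longrightarrow>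
        fequiv (B (nabla N \<Phi> E)) (B (nabla N \<Phi>' E)))"

definition ESF_D :: "('e \<Rightarrow> 'p form) \<Rightarrow> ('ag, 'e) comb_op \<Rightarrow> bool" where
  "ESF_D B nabla \<longleftrightarrow>
     (\<forall>N. society N \<longrightarrow> (\<exists>d\<in>N. \<forall>\<Phi> E. profile N \<Phi> \<longrightarrow>
        entails (B (nabla N \<Phi> E)) (B (nabla1 nabla d (\<Phi> d) E))))"

end

theory Submission
  imports Defs
begin

text \<open>The models of \<open>\<nabla>(\<Phi>,E)\<close> depend only on the models of \<open>E\<close> (ESF2) and, by ESF1, ESF3 and ESF4,
  form a choice function on sets of valuations satisfying Arrow's choice axiom. Under this
  translation ESF-P is the Pareto principle, ESF-I is independence of irrelevant alternatives and
  ESF-SD supplies the individual choice functions needed in Arrow's proof, whose alternatives are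
  the (at least four) valuations. Arrow's argument via decisive coalitions then yields an agent whose
  strict pairwise choices are always followed, and by the choice axiom this agent's choice
  contains the fused one on every set.\<close>

section \<open>Choice functions\<close>

definition choice_function :: "('w set \<Rightarrow> 'w set) \<Rightarrow> bool" where
  "choice_function c \<longleftrightarrow> (\<forall>S. S \<noteq> {} \<longrightarrow> c S \<subseteq> S \<and> c S \<noteq> {}) \<and>
     (\<forall>S T. T \<subseteq> S \<longrightarrow> T \<noteq> {} \<longrightarrow> c S \<inter> T \<noteq> {} \<longrightarrow> c T = c S \<inter> T)"

lemma choice_function_subset: "choice_function c \<Longrightarrow> S \<noteq> {} \<Longrightarrow> c S \<subseteq> S"
  unfolding choice_function_def by blast

lemma choice_function_nonempty: "choice_function c \<Longrightarrow> S \<noteq> {} \<Longrightarrow> c S \<noteq> {}"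
  unfolding choice_function_def by blast

lemma choice_function_restrict:
  "choice_function c \<Longrightarrow> T \<subseteq> S \<Longrightarrow> T \<noteq> {} \<Longrightarrow> c S \<inter> T \<noteq> {} \<Longrightarrow> c T = c S \<inter> T"
  unfolding choice_function_def by blast

lemma choice_function_singleton: "choice_function c \<Longrightarrow> c {a} = {a}"
  using choice_function_subset[of c "{a}"] choice_function_nonempty[of c "{a}"] by blast

lemma choice_function_pair_cases:
  assumes "choice_function c"
  shows "c {x,y} = {x} \<or> c {x,y} = {y} \<or> c {x,y} = {x,y}"
  using choice_function_subset[OF assms, of "{x,y}"] choice_function_nonempty[OF assms, of "{x,y}"]
  by blast

lemma choice_function_weak_strict_trans:
  assumes c: "choice_function c" and zx: "z \<in> c {z,x}" and xy: "c {x,y} = {x}" "x \<noteq> y"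
  shows "c {z,y} = {z}"
proof -
  let ?S = "{x,y,z}"
  have S: "c ?S \<subseteq> ?S" "c ?S \<noteq> {}"
    using choice_function_subset[OF c] choice_function_nonempty[OF c] by auto
  have y: "y \<notin> c ?S"
  proof
    assume "y \<in> c ?S"
    then have "c {x,y} = c ?S \<inter> {x,y}" by (intro choice_function_restrict[OF c]) auto
    with \<open>y \<in> c ?S\<close> xy show False by auto
  qed
  show ?thesis
  proof (cases "z \<in> c ?S")
    case True
    then have "c {z,y} = c ?S \<inter> {z,y}" by (intro choice_function_restrict[OF c]) auto
    with y True show ?thesis by auto
  next
    case False
    with S y have x: "c ?S = {x}" by auto
    then have "c {z,x} = c ?S \<inter> {z,x}" by (intro choice_function_restrict[OF c]) auto
    with x False zx show ?thesis by auto
  qed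
qed

lemma choice_function_strict_weak_trans:
  assumes c: "choice_function c" and xy: "c {x,y} = {x}" "x \<noteq> y" and yz: "y \<in> c {y,z}"
  shows "c {x,z} = {x}"
proof -
  let ?S = "{x,y,z}"
  have S: "c ?S \<subseteq> ?S" "c ?S \<noteq> {}"
    using choice_function_subset[OF c] choice_function_nonempty[OF c] by auto
  have y: "y \<notin> c ?S"
  proof
    assume "y \<in> c ?S"
    then have "c {x,y} = c ?S \<inter> {x,y}" by (intro choice_function_restrict[OF c]) auto
    with \<open>y \<in> c ?S\<close> xy show False by auto
  qed
  have z: "z \<notin> c ?S \<or> z = x"
  proof (rule ccontr)
    assume "\<not> (z \<notin> c ?S \<or> z = x)"
    then have "z \<in> c ?S" "z \<noteq> x" by auto
    moreover from this have "c {y,z} = c ?S \<inter> {y,z}" by (intro choice_function_restrict[OF c]) auto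
    ultimately show False using y yz by auto
  qed
  have x: "x \<in> c ?S" using S y z by auto
  then have "c {x,z} = c ?S \<inter> {x,z}" by (intro choice_function_restrict[OF c]) auto
  with x z show ?thesis by auto
qed

lemma choice_function_strict_trans:
  "choice_function c \<Longrightarrow> c {x,y} = {x} \<Longrightarrow> c {y,z} = {y} \<Longrightarrow> x \<noteq> y \<Longrightarrow> c {x,z} = {x}"
  using choice_function_strict_weak_trans[of c x y z] by auto

lemma choice_function_subset_if_pairwise:
  assumes c: "choice_function c" and d: "choice_function d" and S: "S \<noteq> {}"
    and pairwise: "\<And>x y. x \<noteq> y \<Longrightarrow> d {x,y} = {x} \<Longrightarrow> c {x,y} = {x}"
  shows "c S \<subseteq> d S"
proof
  fix w assume w: "w \<in> c S"
  show "w \<in> d S"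
  proof (rule ccontr)
    assume w_out: "w \<notin> d S"
    obtain v where v: "v \<in> d S" using choice_function_nonempty[OF d S] by blast
    have vw: "v \<in> S" "w \<in> S" "v \<noteq> w"
      using v w w_out choice_function_subset[OF d S] choice_function_subset[OF c S] by auto
    have "d {v,w} = d S \<inter> {v,w}" by (rule choice_function_restrict[OF d]) (use vw v in auto)
    with v w_out have "d {v,w} = {v}" by blast
    then have "c {v,w} = {v}" using pairwise vw(3) by blast
    moreover have "c {v,w} = c S \<inter> {v,w}" by (rule choice_function_restrict[OF c]) (use vw w in auto)
    ultimately show False using w vw(3) by auto
  qed
qed

section \<open>Arrow's theorem for choice functions\<close>

text \<open>Assumption \<open>sd\<close> consists of cases (ii)-(iv) of ESF-SD.\<close>

locale arrow_aggregation =
  fixes agg :: "('ag \<Rightarrow> 'e) \<Rightarrow> 'w set \<Rightarrow> 'w set"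
    and ind :: "'ag \<Rightarrow> 'e \<Rightarrow> 'w set \<Rightarrow> 'w set"
    and N :: "'ag set"
    and prof :: "('ag \<Rightarrow> 'e) \<Rightarrow> bool"
  assumes agg_choice: "prof \<Phi> \<Longrightarrow> choice_function (agg \<Phi>)"
    and ind_choice: "choice_function (ind i e)"
    and pareto: "prof \<Phi> \<Longrightarrow> x \<noteq> y \<Longrightarrow> \<forall>i\<in>N. ind i (\<Phi> i) {x,y} = {x} \<Longrightarrow> agg \<Phi> {x,y} = {x}"
    and iia: "prof \<Phi> \<Longrightarrow> prof \<Phi>' \<Longrightarrow> \<forall>i\<in>N. ind i (\<Phi> i) {x,y} = ind i (\<Phi>' i) {x,y} \<Longrightarrow>
       agg \<Phi> {x,y} = agg \<Phi>' {x,y}"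
    and sd: "a \<noteq> b \<Longrightarrow> b \<noteq> c \<Longrightarrow> a \<noteq> c \<Longrightarrow>
       (\<exists>e. ind i e {a,b} = {a,b} \<and> ind i e {b,c} = {b}) \<and>
       (\<exists>e. ind i e {a,b} = {a} \<and> ind i e {b,c} = {b,c}) \<and>
       (\<exists>e. ind i e {a,b} = {a} \<and> ind i e {b,c} = {b})"
    and prof_restrict: "prof (\<lambda>i\<in>N. f i)"
    and third_alternative: "\<exists>z. z \<noteq> x \<and> z \<noteq> y"
    and finite_agents: "finite N"
    and agents_nonempty: "N \<noteq> {}"
begin

lemma three_alternatives: obtains x y z :: 'w where "x \<noteq> y" "y \<noteq> z" "x \<noteq> z"
proof -
  fix x :: 'w
  obtain y where "y \<noteq> x" using third_alternative[of x x] by blast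
  moreover obtain z where "z \<noteq> x" "z \<noteq> y" using third_alternative[of x y] by blast
  ultimately show thesis using that[of x y z] by auto
qed

lemma ind_pair_cases: "ind i e {x,y} = {x} \<or> ind i e {x,y} = {y} \<or> ind i e {x,y} = {x,y}"
  using choice_function_pair_cases[OF ind_choice] .

definition strict_chain :: "'ag \<Rightarrow> 'w \<Rightarrow> 'w \<Rightarrow> 'w \<Rightarrow> 'e \<Rightarrow> bool" where
  "strict_chain i a b c e \<longleftrightarrow> ind i e {a,b} = {a} \<and> ind i e {b,c} = {b} \<and> ind i e {a,c} = {a}"

definition ranks_top :: "'ag \<Rightarrow> 'w \<Rightarrow> 'w \<Rightarrow> 'w \<Rightarrow> 'w set \<Rightarrow> 'e \<Rightarrow> bool" where
  "ranks_top i a b c V e \<longleftrightarrow> ind i e {a,b} = {a} \<and> ind i e {a,c} = {a} \<and> ind i e {b,c} = V"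

definition ranks_bottom :: "'ag \<Rightarrow> 'w \<Rightarrow> 'w \<Rightarrow> 'w \<Rightarrow> 'w set \<Rightarrow> 'e \<Rightarrow> bool" where
  "ranks_bottom i a b c V e \<longleftrightarrow> ind i e {b,a} = {b} \<and> ind i e {c,a} = {c} \<and> ind i e {b,c} = V"

lemma strict_chain_exists:
  assumes "a \<noteq> b" "b \<noteq> c" "a \<noteq> c"
  shows "\<exists>e. strict_chain i a b c e"
proof -
  obtain e where e: "ind i e {a,b} = {a}" "ind i e {b,c} = {b}" using sd[OF assms, of i] by blast
  then have "ind i e {a,c} = {a}" using choice_function_strict_trans[OF ind_choice] assms(1) by blast
  with e show ?thesis unfolding strict_chain_def by blast
qed

lemma ranks_top_exists:
  assumes d: "a \<noteq> b" "b \<noteq> c" "a \<noteq> c" and V: "V = {b} \<or> V = {c} \<or> V = {b,c}"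
  shows "\<exists>e. ranks_top i a b c V e"
  using V
proof (elim disjE)
  assume "V = {b}"
  with strict_chain_exists[of a b c i] d show ?thesis unfolding strict_chain_def ranks_top_def by auto
next
  assume "V = {c}"
  with strict_chain_exists[of a c b i] d show ?thesis
    unfolding strict_chain_def ranks_top_def by (auto simp: insert_commute)
next
  assume V: "V = {b,c}"
  obtain e where e: "ind i e {a,b} = {a}" "ind i e {b,c} = {b,c}" using sd[OF d, of i] by blast
  then have "ind i e {a,c} = {a}" using choice_function_strict_weak_trans[OF ind_choice] d by auto
  with e V show ?thesis unfolding ranks_top_def by auto
qed

lemma ranks_bottom_exists:
  assumes d: "a \<noteq> b" "b \<noteq> c" "a \<noteq> c" and V: "V = {b} \<or> V = {c} \<or> V = {b,c}"
  shows "\<exists>e. ranks_bottom i a b c V e"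
  using V
proof (elim disjE)
  assume "V = {b}"
  with strict_chain_exists[of b c a i] d show ?thesis unfolding strict_chain_def ranks_bottom_def by auto
next
  assume "V = {c}"
  with strict_chain_exists[of c b a i] d show ?thesis
    unfolding strict_chain_def ranks_bottom_def by (auto simp: insert_commute)
next
  assume V: "V = {b,c}"
  obtain e where e: "ind i e {b,c} = {b,c}" "ind i e {c,a} = {c}" using sd[of b c a i] d by auto
  then have "ind i e {b,a} = {b}"
    using choice_function_weak_strict_trans[OF ind_choice, where x = c] d by auto
  with e V show ?thesis unfolding ranks_bottom_def by auto
qed

definition decisive_over :: "'ag set \<Rightarrow> 'w \<Rightarrow> 'w \<Rightarrow> bool" where
  "decisive_over G x y \<longleftrightarrow>
     (\<forall>\<Phi>. prof \<Phi> \<longrightarrow> (\<forall>i\<in>G. ind i (\<Phi> i) {x,y} = {x}) \<longrightarrow> agg \<Phi> {x,y} = {x})"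

definition weakly_decisive_over :: "'ag set \<Rightarrow> 'w \<Rightarrow> 'w \<Rightarrow> bool" where
  "weakly_decisive_over G x y \<longleftrightarrow>
     (\<forall>\<Phi>. prof \<Phi> \<longrightarrow> (\<forall>i\<in>G. ind i (\<Phi> i) {x,y} = {x}) \<longrightarrow>
        (\<forall>i\<in>N-G. ind i (\<Phi> i) {x,y} = {y}) \<longrightarrow> agg \<Phi> {x,y} = {x})"

definition decisive :: "'ag set \<Rightarrow> bool" where
  "decisive G \<longleftrightarrow> (\<forall>a b. a \<noteq> b \<longrightarrow> decisive_over G a b)"

lemma decisive_over_imp_weakly: "decisive_over G x y \<Longrightarrow> weakly_decisive_over G x y"
  unfolding decisive_over_def weakly_decisive_over_def by blast

lemma weakly_decisive_by_witness:
  assumes \<Psi>: "prof \<Psi>" and win: "agg \<Psi> {x,y} = {x}"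
    and G: "\<forall>i\<in>G. ind i (\<Psi> i) {x,y} = {x}" and others: "\<forall>i\<in>N-G. ind i (\<Psi> i) {x,y} = {y}"
  shows "weakly_decisive_over G x y"
  unfolding weakly_decisive_over_def
proof (intro allI impI)
  fix \<Phi> assume \<Phi>: "prof \<Phi>" and "\<forall>i\<in>G. ind i (\<Phi> i) {x,y} = {x}" "\<forall>i\<in>N-G. ind i (\<Phi> i) {x,y} = {y}"
  with G others have "\<forall>i\<in>N. ind i (\<Phi> i) {x,y} = ind i (\<Psi> i) {x,y}" by blast
  with iia[OF \<Phi> \<Psi>] win show "agg \<Phi> {x,y} = {x}" by simp
qed

text \<open>The auxiliary profile agrees with \<open>\<Phi>\<close> on \<open>{x,z}\<close>; there \<open>G\<close> ranks \<open>x > y > z\<close> and all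
  others put \<open>y\<close> on top, so \<open>x\<close> beats \<open>y\<close> by weak decisiveness and \<open>y\<close> beats \<open>z\<close> by Pareto.
  The next lemma is the mirror image, with \<open>x\<close> at the bottom for everyone outside \<open>G\<close>.\<close>

lemma weakly_decisive_extend_loser:
  assumes w: "weakly_decisive_over G x y" and d: "x \<noteq> y" "y \<noteq> z" "x \<noteq> z" and GN: "G \<subseteq> N"
  shows "decisive_over G x z"
  unfolding decisive_over_def
proof (intro allI impI)
  fix \<Phi> assume \<Phi>: "prof \<Phi>" and g: "\<forall>i\<in>G. ind i (\<Phi> i) {x,z} = {x}"
  define \<Psi> where "\<Psi> = (\<lambda>i\<in>N. if i \<in> G then SOME e. strict_chain i x y z e
      else SOME e. ranks_top i y x z (ind i (\<Phi> i) {x,z}) e)"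
  have \<Psi>: "prof \<Psi>" unfolding \<Psi>_def by (rule prof_restrict)
  have inG: "strict_chain i x y z (\<Psi> i)" if "i \<in> N" "i \<in> G" for i
    using that strict_chain_exists[OF d, of i] unfolding \<Psi>_def by (auto intro: someI_ex)
  have outG: "ranks_top i y x z (ind i (\<Phi> i) {x,z}) (\<Psi> i)" if "i \<in> N" "i \<notin> G" for i
    using that ranks_top_exists[of y x z "ind i (\<Phi> i) {x,z}" i] d ind_pair_cases[of i "\<Phi> i" x z]
    unfolding \<Psi>_def by (auto intro: someI_ex)
  have "\<forall>i\<in>G. ind i (\<Psi> i) {x,y} = {x}" "\<forall>i\<in>N-G. ind i (\<Psi> i) {x,y} = {y}"
    using inG outG GN by (auto simp: strict_chain_def ranks_top_def insert_commute)
  with w \<Psi> have "agg \<Psi> {x,y} = {x}" unfolding weakly_decisive_over_def by blast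
  moreover have "agg \<Psi> {y,z} = {y}"
    using inG outG by (intro pareto[OF \<Psi> d(2)]) (auto simp: strict_chain_def ranks_top_def)
  ultimately have "agg \<Psi> {x,z} = {x}" using choice_function_strict_trans[OF agg_choice[OF \<Psi>]] d by blast
  moreover have "agg \<Phi> {x,z} = agg \<Psi> {x,z}"
  proof (intro iia[OF \<Phi> \<Psi>] ballI)
    fix i assume "i \<in> N"
    then show "ind i (\<Phi> i) {x,z} = ind i (\<Psi> i) {x,z}"
      using inG outG g by (cases "i \<in> G") (auto simp: strict_chain_def ranks_top_def)
  qed
  ultimately show "agg \<Phi> {x,z} = {x}" by simp
qed

lemma weakly_decisive_extend_winner:
  assumes w: "weakly_decisive_over G x y" and d: "x \<noteq> y" "y \<noteq> z" "x \<noteq> z" and GN: "G \<subseteq> N"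
  shows "decisive_over G z y"
  unfolding decisive_over_def
proof (intro allI impI)
  fix \<Phi> assume \<Phi>: "prof \<Phi>" and g: "\<forall>i\<in>G. ind i (\<Phi> i) {z,y} = {z}"
  define \<Psi> where "\<Psi> = (\<lambda>i\<in>N. if i \<in> G then SOME e. strict_chain i z x y e
      else SOME e. ranks_bottom i x z y (ind i (\<Phi> i) {z,y}) e)"
  have \<Psi>: "prof \<Psi>" unfolding \<Psi>_def by (rule prof_restrict)
  have inG: "strict_chain i z x y (\<Psi> i)" if "i \<in> N" "i \<in> G" for i
    using that strict_chain_exists[of z x y i] d unfolding \<Psi>_def by (auto intro: someI_ex)
  have outG: "ranks_bottom i x z y (ind i (\<Phi> i) {z,y}) (\<Psi> i)" if "i \<in> N" "i \<notin> G" for i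
    using that ranks_bottom_exists[of x z y "ind i (\<Phi> i) {z,y}" i] d ind_pair_cases[of i "\<Phi> i" z y]
    unfolding \<Psi>_def by (auto intro: someI_ex)
  have "\<forall>i\<in>G. ind i (\<Psi> i) {x,y} = {x}" "\<forall>i\<in>N-G. ind i (\<Psi> i) {x,y} = {y}"
    using inG outG GN by (auto simp: strict_chain_def ranks_bottom_def insert_commute)
  with w \<Psi> have "agg \<Psi> {x,y} = {x}" unfolding weakly_decisive_over_def by blast
  moreover have "agg \<Psi> {z,x} = {z}"
  proof (intro pareto[OF \<Psi>] ballI)
    fix i assume "i \<in> N"
    then show "ind i (\<Psi> i) {z,x} = {z}"
      using inG outG by (cases "i \<in> G") (auto simp: strict_chain_def ranks_bottom_def insert_commute)
  qed (use d in simp)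
  ultimately have "agg \<Psi> {z,y} = {z}" using choice_function_strict_trans[OF agg_choice[OF \<Psi>]] d by blast
  moreover have "agg \<Phi> {z,y} = agg \<Psi> {z,y}"
  proof (intro iia[OF \<Phi> \<Psi>] ballI)
    fix i assume "i \<in> N"
    then show "ind i (\<Phi> i) {z,y} = ind i (\<Psi> i) {z,y}"
      using inG outG g by (cases "i \<in> G") (auto simp: strict_chain_def ranks_bottom_def)
  qed
  ultimately show "agg \<Phi> {z,y} = {z}" by simp
qed

lemma weakly_decisive_imp_decisive:
  assumes w: "weakly_decisive_over G x y" and xy: "x \<noteq> y" and GN: "G \<subseteq> N"
  shows "decisive G"
proof -
  have from_x: "decisive_over G x c" if "c \<noteq> x" for c
  proof (cases "c = y")
    case True
    obtain z where z: "z \<noteq> x" "z \<noteq> y" using third_alternative by blast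
    then have "weakly_decisive_over G x z"
      using weakly_decisive_extend_loser[OF w xy _ _ GN] decisive_over_imp_weakly by auto
    from weakly_decisive_extend_loser[OF this _ _ _ GN, of y] z xy True show ?thesis by auto
  qed (use weakly_decisive_extend_loser[OF w xy _ _ GN] that in auto)
  show ?thesis unfolding decisive_def
  proof (intro allI impI)
    fix a b :: 'w assume ab: "a \<noteq> b"
    consider "a = x" | "a \<noteq> x" "b \<noteq> x" | "a \<noteq> x" "b = x" by blast
    then show "decisive_over G a b"
    proof cases
      case 1 with from_x ab show ?thesis by auto
    next
      case 2
      then have "weakly_decisive_over G x b" using from_x decisive_over_imp_weakly by auto
      from weakly_decisive_extend_winner[OF this _ _ _ GN, of a] ab 2 show ?thesis by auto
    next
      case 3
      obtain c where c: "c \<noteq> a" "c \<noteq> x" using third_alternative by blast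
      then have "weakly_decisive_over G x c" using from_x decisive_over_imp_weakly by auto
      from weakly_decisive_extend_winner[OF this _ _ _ GN, of a] c 3
      have "weakly_decisive_over G a c" using decisive_over_imp_weakly by auto
      from weakly_decisive_extend_loser[OF this _ _ _ GN, of x] c 3 show ?thesis by auto
    qed
  qed
qed

text \<open>Contraction: in the profile where \<open>i\<close> ranks \<open>x > y > z\<close>, the rest of \<open>G\<close> ranks \<open>z > x > y\<close>
  and everyone else \<open>y > z > x\<close>, either \<open>x\<close> beats \<open>z\<close> (then \<open>{i}\<close> is weakly decisive) or \<open>z\<close>
  is weakly chosen over \<open>x\<close>, hence beats \<open>y\<close> (then \<open>G - {i}\<close> is weakly decisive).\<close>

lemma decisive_split:
  assumes D: "decisive G" and GN: "G \<subseteq> N" and i: "i \<in> G" "G \<noteq> {i}"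
  shows "decisive {i} \<or> decisive (G - {i})"
proof -
  obtain x y z :: 'w where d: "x \<noteq> y" "y \<noteq> z" "x \<noteq> z" by (rule three_alternatives)
  define \<Psi> where "\<Psi> = (\<lambda>j\<in>N. if j = i then SOME e. strict_chain j x y z e
      else if j \<in> G then SOME e. strict_chain j z x y e else SOME e. strict_chain j y z x e)"
  have \<Psi>: "prof \<Psi>" unfolding \<Psi>_def by (rule prof_restrict)
  have at_i: "strict_chain i x y z (\<Psi> i)"
    using i GN strict_chain_exists[of x y z i] d unfolding \<Psi>_def by (auto intro: someI_ex)
  have in_G: "strict_chain j z x y (\<Psi> j)" if "j \<in> G" "j \<noteq> i" for j
    using that GN strict_chain_exists[of z x y j] d unfolding \<Psi>_def by (auto intro: someI_ex)
  have out_G: "strict_chain j y z x (\<Psi> j)" if "j \<in> N" "j \<notin> G" for j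
    using that i strict_chain_exists[of y z x j] d unfolding \<Psi>_def by (auto intro: someI_ex)
  have "\<forall>j\<in>G. ind j (\<Psi> j) {x,y} = {x}"
    using at_i in_G unfolding strict_chain_def by blast
  then have xy: "agg \<Psi> {x,y} = {x}" using D \<Psi> d unfolding decisive_def decisive_over_def by blast
  show ?thesis
  proof (cases "agg \<Psi> {x,z} = {x}")
    case True
    have "ind j (\<Psi> j) {x,z} = {z}" if "j \<in> N - {i}" for j
      using that in_G out_G by (cases "j \<in> G") (auto simp: strict_chain_def insert_commute)
    with at_i have "weakly_decisive_over {i} x z"
      by (intro weakly_decisive_by_witness[OF \<Psi> True]) (auto simp: strict_chain_def)
    then show ?thesis using weakly_decisive_imp_decisive d i GN by blast
  next
    case False
    then have "z \<in> agg \<Psi> {z,x}"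
      using choice_function_pair_cases[OF agg_choice[OF \<Psi>], of x z] by (auto simp: insert_commute)
    then have zy: "agg \<Psi> {z,y} = {z}"
      using choice_function_weak_strict_trans[OF agg_choice[OF \<Psi>] _ xy d(1)] by blast
    have "ind j (\<Psi> j) {z,y} = {y}" if "j \<in> N - (G - {i})" for j
      using that at_i out_G by (cases "j = i") (auto simp: strict_chain_def insert_commute)
    with in_G have "weakly_decisive_over (G - {i}) z y"
      by (intro weakly_decisive_by_witness[OF \<Psi> zy]) (auto simp: strict_chain_def insert_commute)
    then show ?thesis using weakly_decisive_imp_decisive d GN by blast
  qed
qed

lemma decisive_singleton_exists:
  "finite G \<Longrightarrow> G \<noteq> {} \<Longrightarrow> G \<subseteq> N \<Longrightarrow> decisive G \<Longrightarrow> \<exists>d\<in>G. decisive {d}"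
proof (induction "card G" arbitrary: G rule: less_induct)
  case less
  obtain i where i: "i \<in> G" using less.prems by blast
  show ?case
  proof (cases "G = {i}")
    case False
    with decisive_split[OF less.prems(4,3) i] consider "decisive {i}" | "decisive (G - {i})" by blast
    then show ?thesis
    proof cases
      case 2
      have "card (G - {i}) < card G" using less.prems(1) i by (rule card_Diff1_less)
      with less.hyps[of "G - {i}"] less.prems 2 False i show ?thesis by blast
    qed (use i in blast)
  qed (use less.prems i in auto)
qed

theorem dictator_exists:
  "\<exists>d\<in>N. \<forall>\<Phi> x y. prof \<Phi> \<longrightarrow> x \<noteq> y \<longrightarrow> ind d (\<Phi> d) {x,y} = {x} \<longrightarrow> agg \<Phi> {x,y} = {x}"
proof -
  have "decisive N" unfolding decisive_def decisive_over_def using pareto by blast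
  with decisive_singleton_exists[OF finite_agents agents_nonempty] obtain d where "d \<in> N" "decisive {d}"
    by blast
  then show ?thesis unfolding decisive_def decisive_over_def by blast
qed

end

section \<open>Fusion operators as choice functions\<close>

lemma models_Conj: "models (Conj f g) = models f \<inter> models g"
  by (auto simp: models_def)

lemma models_Bot: "models Bot = {}"
  by (simp add: models_def)

lemma definable_partial_valuation:
  assumes "finite P"
  shows "\<exists>f. models f = {v. \<forall>p\<in>P. p \<in> v \<longleftrightarrow> p \<in> w}"
  using assms
proof (induction P rule: finite_induct)
  case empty
  have "models Top = UNIV" by (simp add: models_def)
  then show ?case by auto
next
  case (insert p P)
  then obtain f where f: "models f = {v. \<forall>q\<in>P. q \<in> v \<longleftrightarrow> q \<in> w}" by blast
  have "models (Conj (if p \<in> w then Var p else Neg (Var p)) f) = {v. \<forall>q\<in>insert p P. q \<in> v \<longleftrightarrow> q \<in> w}"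
    using f by (auto simp: models_def)
  then show ?case by blast
qed

lemma definable_valuation: "\<exists>f. models f = {w :: 'p::finite set}"
proof -
  obtain f where "models f = {v. \<forall>p\<in>(UNIV :: 'p set). p \<in> v \<longleftrightarrow> p \<in> w}"
    using definable_partial_valuation[OF finite_UNIV] by blast
  moreover have "{v. \<forall>p\<in>(UNIV :: 'p set). p \<in> v \<longleftrightarrow> p \<in> w} = {w}" by auto
  ultimately show ?thesis by auto
qed

lemma definable: "\<exists>f. models f = (S :: 'p::finite set set)"
proof -
  have "finite S" by simp
  then show ?thesis
  proof (induction S rule: finite_induct)
    case empty
    then show ?case using models_Bot by blast
  next
    case (insert w S)
    obtain f g where "models f = {w}" "models g = S" using definable_valuation insert.IH by blast
    then have "models (Disj f g) = insert w S" by (auto simp: models_def)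
    then show ?case by blast
  qed
qed

lemma epistemic_space_models_nonempty: "epistemic_space B \<Longrightarrow> models (B E) \<noteq> {}"
  unfolding epistemic_space_def consistent_def entails_def models_Bot by blast

lemma epistemic_space_realises:
  assumes "epistemic_space (B :: 'e \<Rightarrow> 'p::finite form)" "S \<noteq> {}"
  shows "\<exists>E. models (B E) = S"
proof -
  obtain f where f: "models f = S" using definable by blast
  with assms(2) have "consistent f" unfolding consistent_def entails_def models_Bot by blast
  then obtain E where "fequiv (B E) f" using assms(1) unfolding epistemic_space_def by blast
  with f show ?thesis unfolding fequiv_def by blast
qed

lemma valuation_avoiding:
  assumes "card (UNIV :: 'p::finite set) \<ge> 2"
  shows "\<exists>z::'p set. z \<noteq> x \<and> z \<noteq> y"
proof -
  have "card {x,y} < card (UNIV :: 'p set set)"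
  proof -
    have "card {x,y} \<le> 2" by (simp add: card_insert_if)
    also have "\<dots> < 2 ^ 2" by simp
    also have "\<dots> \<le> (2::nat) ^ card (UNIV :: 'p set)" using assms by (rule power_increasing) simp
    also have "\<dots> = card (UNIV :: 'p set set)" using card_Pow[of "UNIV :: 'p set"] by simp
    finally show ?thesis .
  qed
  then have "{x,y} \<noteq> UNIV" by auto
  then show ?thesis by blast
qed

text \<open>By ESF2 the result does not depend on which state with models \<open>S\<close> is picked.\<close>

definition fusion_choice ::
  "('e \<Rightarrow> 'p form) \<Rightarrow> ('ag, 'e) comb_op \<Rightarrow> 'ag set \<Rightarrow> ('ag \<Rightarrow> 'e) \<Rightarrow> 'p valuation set \<Rightarrow> 'p valuation set"
  where "fusion_choice B nabla M \<Phi> S = models (B (nabla M \<Phi> (SOME E. models (B E) = S)))"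

abbreviation agent_choice ::
  "('e \<Rightarrow> 'p form) \<Rightarrow> ('ag, 'e) comb_op \<Rightarrow> 'ag \<Rightarrow> 'e \<Rightarrow> 'p valuation set \<Rightarrow> 'p valuation set"
  where "agent_choice B nabla i e \<equiv> fusion_choice B nabla {i} (single i e)"

lemma profile_single: "profile {i} (single i e)"
  unfolding profile_def society_def single_def by auto

context
  fixes B :: "'e \<Rightarrow> 'p::finite form" and nabla :: "('ag::wellorder, 'e) comb_op"
  assumes es: "epistemic_space B" and bf: "ES_basic_fusion B nabla"
begin

lemma models_fusion:
  assumes p: "profile M \<Phi>"
  shows "models (B (nabla M \<Phi> E)) = fusion_choice B nabla M \<Phi> (models (B E))"
proof -
  let ?E = "SOME E'. models (B E') = models (B E)"
  have "models (B ?E) = models (B E)" by (rule someI_ex) blast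
  then have "fequiv (B E) (B ?E)" unfolding fequiv_def by simp
  moreover have "prof_equiv M \<Phi> M \<Phi>" unfolding prof_equiv_def by simp
  ultimately have "fequiv (B (nabla M \<Phi> E)) (B (nabla M \<Phi> ?E))"
    using bf p unfolding ES_basic_fusion_def by blast
  then show ?thesis unfolding fequiv_def fusion_choice_def .
qed

lemma models_nabla1: "models (B (nabla1 nabla i e E)) = agent_choice B nabla i e (models (B E))"
  unfolding nabla1_def by (rule models_fusion[OF profile_single])

lemma choice_function_fusion:
  assumes p: "profile M \<Phi>"
  shows "choice_function (fusion_choice B nabla M \<Phi>)"
  unfolding choice_function_def
proof (intro conjI allI impI)
  fix S :: "'p set set" assume "S \<noteq> {}"
  then obtain E where E: "models (B E) = S" using epistemic_space_realises[OF es] by blast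
  have "entails (B (nabla M \<Phi> E)) (B E)" using bf p unfolding ES_basic_fusion_def by blast
  with E show "fusion_choice B nabla M \<Phi> S \<subseteq> S" unfolding entails_def models_fusion[OF p] by simp
  show "fusion_choice B nabla M \<Phi> S \<noteq> {}"
    using models_fusion[OF p, of E] E epistemic_space_models_nonempty[OF es, of "nabla M \<Phi> E"] by simp
next
  fix S T :: "'p set set"
  assume TS: "T \<subseteq> S" and T: "T \<noteq> {}" and meet: "fusion_choice B nabla M \<Phi> S \<inter> T \<noteq> {}"
  obtain ES where ES: "models (B ES) = S" using epistemic_space_realises[OF es] TS T by blast
  obtain ET where ET: "models (B ET) = T" using epistemic_space_realises[OF es] T by blast
  have conj: "fequiv (B ET) (Conj (B ES) (B ET))" unfolding fequiv_def models_Conj ES ET using TS by blast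
  have "entails (Conj (B (nabla M \<Phi> ES)) (B ET)) (B (nabla M \<Phi> ET))"
    using bf p conj unfolding ES_basic_fusion_def by blast
  then have "fusion_choice B nabla M \<Phi> S \<inter> T \<subseteq> fusion_choice B nabla M \<Phi> T"
    unfolding entails_def models_Conj models_fusion[OF p] ES ET .
  moreover have "\<not> entails (Conj (B (nabla M \<Phi> ES)) (B ET)) Bot"
    unfolding entails_def models_Conj models_fusion[OF p] ES ET models_Bot using meet by blast
  then have "entails (B (nabla M \<Phi> ET)) (Conj (B (nabla M \<Phi> ES)) (B ET))"
    using bf p conj unfolding ES_basic_fusion_def by blast
  then have "fusion_choice B nabla M \<Phi> T \<subseteq> fusion_choice B nabla M \<Phi> S \<inter> T"
    unfolding entails_def models_Conj models_fusion[OF p] ES ET .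
  ultimately show "fusion_choice B nabla M \<Phi> T = fusion_choice B nabla M \<Phi> S \<inter> T" by blast
qed

lemma fusion_pareto:
  assumes P: "ESF_P B nabla" and p: "profile N \<Phi>" and xy: "x \<noteq> y"
    and all: "\<forall>i\<in>N. agent_choice B nabla i (\<Phi> i) {x,y} = {x}"
  shows "fusion_choice B nabla N \<Phi> {x,y} = {x}"
proof -
  obtain E where E: "models (B E) = {x,y}" using epistemic_space_realises[OF es, of "{x,y}"] by auto
  obtain E' where E': "models (B E') = {y}" using epistemic_space_realises[OF es, of "{y}"] by auto
  have m: "models (B (nabla1 nabla i (\<Phi> i) E)) = {x}" if "i \<in> N" for i
    using all that unfolding models_nabla1 E by blast
  have "N \<noteq> {}" using p by (simp add: profile_def society_def)
  with m have common: "(\<Inter>i\<in>N. models (B (nabla1 nabla i (\<Phi> i) E))) \<noteq> {}" by auto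
  have disjoint: "entails (Conj (B (nabla1 nabla i (\<Phi> i) E)) (B E')) Bot" if "i \<in> N" for i
    unfolding entails_def models_Conj models_Bot using m[OF that] E' xy by auto
  have "entails (Conj (B (nabla N \<Phi> E)) (B E')) Bot"
    using P[unfolded ESF_P_def, rule_format, OF p common disjoint] .
  then have "y \<notin> fusion_choice B nabla N \<Phi> {x,y}"
    unfolding entails_def models_Conj models_Bot models_fusion[OF p] E E' by blast
  with choice_function_pair_cases[OF choice_function_fusion[OF p], of x y] show ?thesis by auto
qed

text \<open>Every state below \<open>E\<close> has models \<open>{x}\<close>, \<open>{y}\<close> or \<open>{x,y}\<close>, on which the individual choices
  agree.\<close>

lemma fusion_iia:
  assumes I: "ESF_I B nabla" and p: "profile N \<Phi>" and p': "profile N \<Phi>'"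
    and all: "\<forall>i\<in>N. agent_choice B nabla i (\<Phi> i) {x,y} = agent_choice B nabla i (\<Phi>' i) {x,y}"
  shows "fusion_choice B nabla N \<Phi> {x,y} = fusion_choice B nabla N \<Phi>' {x,y}"
proof -
  obtain E where E: "models (B E) = {x,y}" using epistemic_space_realises[OF es, of "{x,y}"] by auto
  have "fequiv (B (nabla1 nabla j (\<Phi> j) E')) (B (nabla1 nabla j (\<Phi>' j) E'))"
    if below: "entails (B E') (B E)" and j: "j \<in> N" for E' j
  proof -
    have "models (B E') \<subseteq> {x,y}" "models (B E') \<noteq> {}"
      using below E epistemic_space_models_nonempty[OF es] unfolding entails_def by auto
    then consider "models (B E') = {x}" | "models (B E') = {y}" | "models (B E') = {x,y}" by blast
    then have "agent_choice B nabla j (\<Phi> j) (models (B E')) = agent_choice B nabla j (\<Phi>' j) (models (B E'))"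
      by cases (use all j choice_function_singleton[OF choice_function_fusion[OF profile_single]] in auto)
    then show ?thesis unfolding fequiv_def models_nabla1 .
  qed
  then have "fequiv (B (nabla N \<Phi> E)) (B (nabla N \<Phi>' E))"
    using I p p' unfolding ESF_I_def by blast
  then show ?thesis unfolding fequiv_def models_fusion[OF p] models_fusion[OF p'] E .
qed

lemma fusion_sd:
  assumes SD: "ESF_SD B nabla" and d: "a \<noteq> b" "b \<noteq> c" "a \<noteq> c"
  shows "(\<exists>e. agent_choice B nabla i e {a,b} = {a,b} \<and> agent_choice B nabla i e {b,c} = {b}) \<and>
    (\<exists>e. agent_choice B nabla i e {a,b} = {a} \<and> agent_choice B nabla i e {b,c} = {b,c}) \<and>
    (\<exists>e. agent_choice B nabla i e {a,b} = {a} \<and> agent_choice B nabla i e {b,c} = {b})"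
proof -
  obtain E1 where E1: "models (B E1) = {a,b}" using epistemic_space_realises[OF es, of "{a,b}"] by auto
  obtain E2 where E2: "models (B E2) = {b,c}" using epistemic_space_realises[OF es, of "{b,c}"] by auto
  have "(\<exists>e. agent_choice B nabla i e {a,b} = {a,b} \<and> agent_choice B nabla i e {b,c} = {b,c}) \<and>
    (\<exists>e. agent_choice B nabla i e {a,b} = {a,b} \<and> agent_choice B nabla i e {b,c} = {b}) \<and>
    (\<exists>e. agent_choice B nabla i e {a,b} = {a} \<and> agent_choice B nabla i e {b,c} = {b,c}) \<and>
    (\<exists>e. agent_choice B nabla i e {a,b} = {a} \<and> agent_choice B nabla i e {b,c} = {b})"
    using SD[unfolded ESF_SD_def, rule_format, of a b c E1 E2 i] d E1 E2
    unfolding models_nabla1 E1 E2 by blast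
  then show ?thesis by blast
qed

lemma arrow_aggregation_fusion:
  assumes card: "card (UNIV :: 'p set) \<ge> 2" and SD: "ESF_SD B nabla" and P: "ESF_P B nabla"
    and I: "ESF_I B nabla" and soc: "society N"
  shows "arrow_aggregation (fusion_choice B nabla N) (agent_choice B nabla) N (profile N)"
proof
  show "choice_function (fusion_choice B nabla N \<Phi>)" if "profile N \<Phi>" for \<Phi>
    using that by (rule choice_function_fusion)
  show "choice_function (agent_choice B nabla i e)" for i e
    by (rule choice_function_fusion[OF profile_single])
  show "fusion_choice B nabla N \<Phi> {x,y} = {x}"
    if "profile N \<Phi>" "x \<noteq> y" "\<forall>i\<in>N. agent_choice B nabla i (\<Phi> i) {x,y} = {x}" for \<Phi> x y
    using that by (rule fusion_pareto[OF P])
  show "fusion_choice B nabla N \<Phi> {x,y} = fusion_choice B nabla N \<Phi>' {x,y}"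
    if "profile N \<Phi>" "profile N \<Phi>'"
      "\<forall>i\<in>N. agent_choice B nabla i (\<Phi> i) {x,y} = agent_choice B nabla i (\<Phi>' i) {x,y}"
    for \<Phi> \<Phi>' x y
    using that by (rule fusion_iia[OF I])
  show "(\<exists>e. agent_choice B nabla i e {a,b} = {a,b} \<and> agent_choice B nabla i e {b,c} = {b}) \<and>
    (\<exists>e. agent_choice B nabla i e {a,b} = {a} \<and> agent_choice B nabla i e {b,c} = {b,c}) \<and>
    (\<exists>e. agent_choice B nabla i e {a,b} = {a} \<and> agent_choice B nabla i e {b,c} = {b})"
    if "a \<noteq> b" "b \<noteq> c" "a \<noteq> c" for a b c i
    using that by (rule fusion_sd[OF SD])
  show "profile N (\<lambda>i\<in>N. f i)" for f :: "'ag \<Rightarrow> 'e"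
    using soc unfolding profile_def by auto
  show "\<exists>z. z \<noteq> x \<and> z \<noteq> y" for x y :: "'p set"
    by (rule valuation_avoiding[OF card])
  show "finite N" "N \<noteq> {}" using soc unfolding society_def by auto
qed

end

theorem theorem6:
  fixes B :: "'e \<Rightarrow> 'p::finite form"
    and nabla :: "('ag::wellorder, 'e) comb_op"
  assumes "epistemic_space B"
    and "card (UNIV :: 'p set) \<ge> 2"
    and "ES_basic_fusion B nabla"
    and "ESF_SD B nabla"
    and "ESF_P B nabla"
    and "ESF_I B nabla"
  shows "ESF_D B nabla"
  unfolding ESF_D_def
proof (intro allI impI)
  note es = assms(1) and bf = assms(3)
  fix N :: "'ag set" assume "society N"
  then interpret arrow_aggregation "fusion_choice B nabla N" "agent_choice B nabla" N "profile N"
    using arrow_aggregation_fusion[OF es bf] assms by blast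
  obtain d where d: "d \<in> N" and dictator: "\<And>\<Phi> x y. profile N \<Phi> \<Longrightarrow> x \<noteq> y \<Longrightarrow>
      agent_choice B nabla d (\<Phi> d) {x,y} = {x} \<Longrightarrow> fusion_choice B nabla N \<Phi> {x,y} = {x}"
    using dictator_exists by blast
  show "\<exists>d\<in>N. \<forall>\<Phi> E. profile N \<Phi> \<longrightarrow> entails (B (nabla N \<Phi> E)) (B (nabla1 nabla d (\<Phi> d) E))"
  proof (intro bexI[OF _ d] allI impI)
    fix \<Phi> :: "'ag \<Rightarrow> 'e" and E :: 'e assume p: "profile N \<Phi>"
    have "fusion_choice B nabla N \<Phi> (models (B E)) \<subseteq> agent_choice B nabla d (\<Phi> d) (models (B E))"
      using dictator[OF p] epistemic_space_models_nonempty[OF es]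
      by (intro choice_function_subset_if_pairwise choice_function_fusion[OF es bf p]
            choice_function_fusion[OF es bf profile_single])
    then show "entails (B (nabla N \<Phi> E)) (B (nabla1 nabla d (\<Phi> d) E))"
      unfolding entails_def models_fusion[OF es bf p] models_nabla1[OF es bf] .
  qed
qed

end
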